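(* Let $H$ be a complete $3$-graph whose edges (triples) are coloured red and blue, and let $d_r,d_b$ be positive integers such that $H$ has at least $d_r+d_b+1$ vertices. Fix a vertex $u$ of $H$. For each other vertex $v$, call the pair $uv$ red if $uv$ is contained in fewer than $d_r$ red triples, and blue if $uv$ is contained in fewer than $d_b$ blue triples. Then $u$ is in at most $2d_b$ red pairs, or $u$ is in at most $2d_r$ blue pairs.
   Context: A $3$-graph is a $3$-uniform hypergraph; the complete $3$-graph contains all triples of its vertex set. *)

theory Defs
  imports Main
begin

text \<open>A red/blue colouring of the complete 3-graph on a finite vertex set V is given by
  a predicate red on 3-element subsets; a triple is blue iff it is not red.\<close>

definition red_codeg :: "'a set \<Rightarrow> ('a set \<Rightarrow> bool) \<Rightarrow> 'a \<Rightarrow> 'a \<Rightarrow> nat" where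
  "red_codeg V red u v = card {w \<in> V - {u, v}. red {u, v, w}}"

definition blue_codeg :: "'a set \<Rightarrow> ('a set \<Rightarrow> bool) \<Rightarrow> 'a \<Rightarrow> 'a \<Rightarrow> nat" where
  "blue_codeg V red u v = card {w \<in> V - {u, v}. \<not> red {u, v, w}}"

definition red_pairs :: "'a set \<Rightarrow> ('a set \<Rightarrow> bool) \<Rightarrow> nat \<Rightarrow> 'a \<Rightarrow> 'a set" where
  "red_pairs V red d_r u = {v \<in> V - {u}. red_codeg V red u v < d_r}"

definition blue_pairs :: "'a set \<Rightarrow> ('a set \<Rightarrow> bool) \<Rightarrow> nat \<Rightarrow> 'a \<Rightarrow> 'a set" where
  "blue_pairs V red d_b u = {v \<in> V - {u}. blue_codeg V red u v < d_b}"

end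

theory Submission
  imports Defs
begin

text \<open>The pair codegrees of \<open>uv\<close> add up to \<open>|V| - 2\<close>, so once \<open>|V| > d_r + d_b\<close> no
  pair is both red and blue.  Let \<open>R\<close> and \<open>B\<close> be the red and the blue pairs at \<open>u\<close>, and
  count the triples \<open>uvw\<close> with \<open>v \<in> R\<close>, \<open>w \<in> B\<close>: there are \<open>|R||B|\<close> of them, at most
  \<open>|R|(d_r - 1)\<close> red ones (each \<open>uv\<close> lies in fewer than \<open>d_r\<close> red triples) and at most
  \<open>|B|(d_b - 1)\<close> blue ones.  Hence \<open>|R||B| \<le> |R|(d_r - 1) + |B|(d_b - 1)\<close>, which is
  impossible if \<open>|R| > 2d_b\<close> and \<open>|B| > 2d_r\<close>, as then each summand is below \<open>|R||B|/2\<close>.\<close>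

lemma card_filter_add_card_filter_not:
  assumes "finite A"
  shows "card {x \<in> A. P x} + card {x \<in> A. \<not> P x} = card A"
proof -
  have "card {x \<in> A. P x} + card {x \<in> A. \<not> P x} = card ({x \<in> A. P x} \<union> {x \<in> A. \<not> P x})"
    using assms by (intro card_Un_disjoint[symmetric]) auto
  also have "{x \<in> A. P x} \<union> {x \<in> A. \<not> P x} = A"
    by blast
  finally show ?thesis .
qed

lemma sum_card_filter_swap:
  assumes "finite X" "finite Y"
  shows "(\<Sum>x\<in>X. card {y \<in> Y. P x y}) = (\<Sum>y\<in>Y. card {x \<in> X. P x y})"
  unfolding card_eq_sum using assms by (rule sum.swap_restrict)

lemma mult_card_eq_sum_card_filter:
  assumes "finite X" "finite Y"
  shows "card X * card Y = (\<Sum>x\<in>X. card {y \<in> Y. P x y}) + (\<Sum>y\<in>Y. card {x \<in> X. \<not> P x y})"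
proof -
  have "card X * card Y = (\<Sum>x\<in>X. card {y \<in> Y. P x y} + card {y \<in> Y. \<not> P x y})"
    using assms(2) by (simp add: card_filter_add_card_filter_not)
  also have "\<dots> = (\<Sum>x\<in>X. card {y \<in> Y. P x y}) + (\<Sum>y\<in>Y. card {x \<in> X. \<not> P x y})"
    by (simp only: sum.distrib sum_card_filter_swap[OF assms, of "\<lambda>x y. \<not> P x y"])
  finally show ?thesis .
qed

lemma mult_le_add_mult_imp_le_double:
  fixes x y a b :: nat
  assumes "x * y \<le> x * a + y * b"
  shows "x \<le> 2 * b \<or> y \<le> 2 * a"
proof (rule ccontr)
  assume "\<not> (x \<le> 2 * b \<or> y \<le> 2 * a)"
  then have "2 * a < y" "2 * b < x" "0 < x" "0 < y" by auto
  then have "x * (2 * a) < x * y" "(2 * b) * y < x * y"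
    by (simp_all only: mult_strict_left_mono mult_strict_right_mono)
  then have "x * (2 * a) + (2 * b) * y < 2 * (x * y)" by linarith
  also have "\<dots> \<le> 2 * (x * a + y * b)" using assms by simp
  also have "\<dots> = x * (2 * a) + (2 * b) * y" by (simp add: algebra_simps)
  finally show False by simp
qed

lemma red_codeg_add_blue_codeg:
  assumes "finite V" "u \<in> V" "v \<in> V" "v \<noteq> u"
  shows "red_codeg V red u v + blue_codeg V red u v = card V - 2"
proof -
  have "red_codeg V red u v + blue_codeg V red u v = card (V - {u, v})"
    unfolding red_codeg_def blue_codeg_def
    using assms(1) by (intro card_filter_add_card_filter_not) simp
  also have "\<dots> = card V - 2"
    using assms by (simp add: card_Diff_subset)
  finally show ?thesis .
qed

lemma red_pairs_Int_blue_pairs: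
  assumes "finite V" "u \<in> V" "d_r + d_b < card V"
  shows "red_pairs V red d_r u \<inter> blue_pairs V red d_b u = {}"
proof -
  have False if "v \<in> red_pairs V red d_r u" "v \<in> blue_pairs V red d_b u" for v
  proof -
    have "red_codeg V red u v < d_r" "blue_codeg V red u v < d_b" "v \<in> V" "v \<noteq> u"
      using that unfolding red_pairs_def blue_pairs_def by auto
    with red_codeg_add_blue_codeg[of V u v red] assms show False by linarith
  qed
  then show ?thesis by blast
qed

lemma card_red_filter_le_red_codeg:
  assumes "finite V" "A \<subseteq> V - {u, v}"
  shows "card {w \<in> A. red {u, v, w}} \<le> red_codeg V red u v"
  unfolding red_codeg_def using assms by (intro card_mono) auto

lemma card_blue_filter_le_blue_codeg:
  assumes "finite V" "A \<subseteq> V - {u, v}"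
  shows "card {w \<in> A. \<not> red {u, v, w}} \<le> blue_codeg V red u v"
  unfolding blue_codeg_def using assms by (intro card_mono) auto

lemma card_red_pairs_times_card_blue_pairs:
  fixes red :: "'a set \<Rightarrow> bool"
  assumes "finite V" "u \<in> V" "d_r + d_b < card V"
  defines "R \<equiv> red_pairs V red d_r u" and "B \<equiv> blue_pairs V red d_b u"
  shows "card R * card B \<le> card R * (d_r - 1) + card B * (d_b - 1)"
proof -
  have disjoint: "R \<inter> B = {}"
    unfolding R_def B_def using assms(1-3) by (rule red_pairs_Int_blue_pairs)
  have R_sub: "R \<subseteq> V - {u}" and B_sub: "B \<subseteq> V - {u}"
    unfolding R_def B_def red_pairs_def blue_pairs_def by auto
  then have finite_R_B: "finite R" "finite B"
    using assms(1) by (simp_all add: finite_subset)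
  have R_avoids: "R \<subseteq> V - {u, w}" if "w \<in> B" for w
    using R_sub disjoint that by blast
  have B_avoids: "B \<subseteq> V - {u, v}" if "v \<in> R" for v
    using B_sub disjoint that by blast
  have red_bound: "card {w \<in> B. red {u, v, w}} \<le> d_r - 1" if "v \<in> R" for v
  proof -
    have "card {w \<in> B. red {u, v, w}} \<le> red_codeg V red u v"
      using assms(1) B_avoids[OF that] by (rule card_red_filter_le_red_codeg)
    moreover have "red_codeg V red u v < d_r"
      using that unfolding R_def red_pairs_def by simp
    ultimately show ?thesis by linarith
  qed
  have blue_bound: "card {v \<in> R. \<not> red {u, v, w}} \<le> d_b - 1" if "w \<in> B" for w
  proof -
    have "card {v \<in> R. \<not> red {u, w, v}} \<le> blue_codeg V red u w"
      using assms(1) R_avoids[OF that] by (rule card_blue_filter_le_blue_codeg)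
    moreover have "{u, w, v} = {u, v, w}" for v
      by blast
    moreover have "blue_codeg V red u w < d_b"
      using that unfolding B_def blue_pairs_def by simp
    ultimately show ?thesis by simp
  qed
  have "card R * card B
      = (\<Sum>v\<in>R. card {w \<in> B. red {u, v, w}}) + (\<Sum>w\<in>B. card {v \<in> R. \<not> red {u, v, w}})"
    using finite_R_B by (rule mult_card_eq_sum_card_filter)
  also have "\<dots> \<le> (\<Sum>v\<in>R. d_r - 1) + (\<Sum>w\<in>B. d_b - 1)"
    using red_bound blue_bound by (intro add_mono sum_mono)
  finally show ?thesis
    by (simp add: mult.commute)
qed

theorem lemma2p2:
  fixes V :: "'a set" and red :: "'a set \<Rightarrow> bool" and d_r d_b :: nat and u :: 'a
  assumes "finite V"
    and "d_r > 0" and "d_b > 0"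
    and "card V \<ge> d_r + d_b + 1"
    and "u \<in> V"
  shows "card (red_pairs V red d_r u) \<le> 2 * d_b \<or> card (blue_pairs V red d_b u) \<le> 2 * d_r"
proof -
  have "card (red_pairs V red d_r u) \<le> 2 * (d_b - 1) \<or> card (blue_pairs V red d_b u) \<le> 2 * (d_r - 1)"
    using assms by (intro mult_le_add_mult_imp_le_double card_red_pairs_times_card_blue_pairs) auto
  then show ?thesis by auto
qed

end
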